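(* Let $n \ge 2$ be an integer. For $1 \le i \le n-1$ and $j = n-i$, define the polynomial $$P_i(t) = \left(1 + t\sqrt{\tfrac{j}{i}}\right)^{i}\left(1 - t\sqrt{\tfrac{i}{j}}\right)^{j}.$$ If $1 \le i \le n-2$ (and $j = n-i$), then $P_i(t) > P_{i+1}(t)$ for all $0 < t < \sqrt{\frac{j-1}{i+1}}$. Consequently, $$P_{n-1}(t) < \dots < P_2(t) < P_1(t) \quad \text{for } 0 < t < \frac{1}{\sqrt{n-1}}.$$ *)

theory Defs
  imports Complex_Main
begin

definition P :: "nat \<Rightarrow> nat \<Rightarrow> real \<Rightarrow> real" where
  "P n i t = (1 + t * sqrt (real (n - i) / real i)) ^ i
             * (1 - t * sqrt (real i / real (n - i))) ^ (n - i)"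

end

theory Submission
  imports Defs
begin

text \<open>Writing \<open>a = sqrt (j/i)\<close>, we have \<open>ln (P n i t) = i ln (1 + t a) + j ln (1 - t/a)\<close>, whose
  derivative in \<open>t\<close> simplifies to \<open>-n t / (1 + t (a - 1/a) - t\<^sup>2)\<close>. Passing from \<open>i\<close> to \<open>i + 1\<close>
  decreases \<open>a\<close>, hence decreases the denominator and makes the derivative more negative; since
  both logarithms vanish at \<open>t = 0\<close>, the mean value theorem gives \<open>P n (i+1) t < P n i t\<close>.\<close>

definition log_profile :: "real \<Rightarrow> real \<Rightarrow> real \<Rightarrow> real" where
  "log_profile p q t = p * ln (1 + t * sqrt (q / p)) + q * ln (1 - t * sqrt (p / q))"

lemma log_profile_zero [simp]: "log_profile p q 0 = 0"
  by (simp add: log_profile_def)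

lemma linear_factors_pos:
  fixes a t :: real
  assumes "a > 0" "0 \<le> t" "t < a"
  shows "1 + t * a > 0" "1 - t / a > 0" "(1 + t * a) * (1 - t / a) = 1 + t * (a - 1 / a) - t\<^sup>2"
  using assms by (auto simp: field_simps power2_eq_square add_pos_nonneg)

lemma log_profile_has_derivative:
  fixes p q t :: real
  assumes "p > 0" "q > 0" "0 \<le> t" "t < sqrt (q / p)"
  shows "(log_profile p q has_real_derivative
           - (p + q) * t / (1 + t * (sqrt (q / p) - sqrt (p / q)) - t\<^sup>2)) (at t)"
proof -
  define a where "a = sqrt (q / p)"
  have "a > 0" "a * a = q / p" using assms by (simp_all add: a_def)
  then have a: "a > 0" "q = p * a * a" using assms(1) by (simp_all add: field_simps)
  have inv: "sqrt (p / q) = 1 / a" by (simp add: a_def real_sqrt_divide)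
  have "t < a" using assms(4) by (simp add: a_def)
  note pos = linear_factors_pos[OF a(1) assms(3) this]
  have "((\<lambda>s. p * ln (1 + s * a) + q * ln (1 - s / a)) has_real_derivative
          p * (a / (1 + t * a)) + q * (- (1 / a) / (1 - t / a))) (at t)"
    using a pos by (auto intro!: derivative_eq_intros simp: mult.commute)
  moreover have "p * (a / (1 + t * a)) + q * (- (1 / a) / (1 - t / a))
                 = - (p + q) * t / ((1 + t * a) * (1 - t / a))"
    using a pos(1) \<open>t < a\<close> by (simp add: field_simps)
  moreover have "log_profile p q = (\<lambda>s. p * ln (1 + s * a) + q * ln (1 - s / a))"
    by (simp add: fun_eq_iff log_profile_def inv flip: a_def)
  ultimately show ?thesis
    by (simp add: inv pos(3) flip: a_def)
qed

lemma log_profile_strict_mono_ratio: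
  fixes p q p' q' t :: real
  assumes "p > 0" "q > 0" "p' > 0" "q' > 0" "p + q = p' + q'"
    and "q' / p' < q / p" and "0 < t" "t < sqrt (q' / p')"
  shows "log_profile p' q' t < log_profile p q t"
proof -
  define a b where "a = sqrt (q / p)" and "b = sqrt (q' / p')"
  have "0 < b" "b < a" using assms by (simp_all add: a_def b_def)
  define D where "D c s = 1 + s * (c - 1 / c) - s\<^sup>2" for c s :: real
  have inv: "sqrt (p / q) = 1 / a" "sqrt (p' / q') = 1 / b"
    by (simp_all add: a_def b_def real_sqrt_divide)
  define g where "g s = log_profile p q s - log_profile p' q' s" for s
  define g' where "g' s = (p + q) * s / D b s - (p + q) * s / D a s" for s
  have "DERIV g s :> g' s" if "0 \<le> s" "s \<le> t" for s
  proof -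
    have "s < b" "s < a" using that assms(8) \<open>b < a\<close> by (simp_all add: b_def)
    then have "s < sqrt (q / p)" "s < sqrt (q' / p')" by (simp_all add: a_def b_def)
    have "DERIV g s :> - (p + q) * s / D a s - - (p + q) * s / D b s"
      unfolding g_def[abs_def] D_def a_def b_def inv[unfolded a_def b_def]
      using log_profile_has_derivative[OF assms(1,2) \<open>0 \<le> s\<close>]
        log_profile_has_derivative[OF assms(3,4) \<open>0 \<le> s\<close>] \<open>s < sqrt (q / p)\<close> \<open>s < sqrt (q' / p')\<close>
      by (intro DERIV_diff) (simp_all add: real_sqrt_divide assms(5))
    moreover have "- (p + q) * s / D a s - - (p + q) * s / D b s = g' s"
      unfolding g'_def by (simp only: minus_mult_left minus_divide_left diff_minus_eq_add)
    ultimately show ?thesis by simp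
  qed
  then obtain z where z: "0 < z" "z < t" "g t - g 0 = t * g' z"
    using MVT2[OF \<open>0 < t\<close>, of g g'] by auto
  have "z < b" using z assms(8) by (simp add: b_def)
  note pos_z = linear_factors_pos[OF \<open>0 < b\<close> less_imp_le[OF z(1)] this]
  have "0 < D b z"
    using mult_pos_pos[OF pos_z(1,2)] by (simp only: pos_z(3) D_def)
  moreover have "1 / a < 1 / b" using \<open>0 < b\<close> \<open>b < a\<close> by (simp add: frac_less2)
  then have "D b z < D a z"
    using \<open>b < a\<close> z(1) by (simp add: D_def mult_strict_left_mono)
  ultimately have "1 / D a z < 1 / D b z" by (simp add: frac_less2)
  then have "0 < g' z"
    using assms(1,2) z(1) mult_strict_left_mono[of "1 / D a z" "1 / D b z" "(p + q) * z"]
    by (simp add: g'_def)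
  with \<open>0 < t\<close> have "0 < t * g' z" by simp
  then show ?thesis using z by (simp add: g_def)
qed

lemma ln_P_eq_log_profile:
  assumes "1 \<le> i" "i < n" "0 \<le> t" "t < sqrt (real (n - i) / real i)"
  shows "P n i t > 0" "ln (P n i t) = log_profile (real i) (real (n - i)) t"
proof -
  define a where "a = sqrt (real (n - i) / real i)"
  have "a > 0" using assms by (simp add: a_def)
  have inv: "sqrt (real i / real (n - i)) = 1 / a" by (simp add: a_def real_sqrt_divide)
  note pos = linear_factors_pos[OF \<open>a > 0\<close> assms(3) assms(4)[folded a_def]]
  have P: "P n i t = (1 + t * a) ^ i * (1 - t / a) ^ (n - i)"
    by (simp add: P_def inv a_def)
  show "P n i t > 0" using pos by (simp add: P)
  show "ln (P n i t) = log_profile (real i) (real (n - i)) t"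
  proof -
    have "ln (P n i t) = ln ((1 + t * a) ^ i) + ln ((1 - t / a) ^ (n - i))"
      unfolding P using pos by (intro ln_mult_pos) auto
    also have "\<dots> = real i * ln (1 + t * a) + real (n - i) * ln (1 - t / a)"
      using pos by (simp add: ln_realpow)
    finally show ?thesis by (simp add: log_profile_def inv flip: a_def)
  qed
qed

lemma P_Suc_less:
  assumes "1 \<le> i" "i \<le> n - 2" "0 < t" "t < sqrt (real (n - i - 1) / real (i + 1))"
  shows "P n (i + 1) t < P n i t"
proof -
  have ratio: "real (n - (i + 1)) / real (i + 1) < real (n - i) / real i"
    using assms(1,2) by (simp add: field_simps of_nat_diff)
  have t: "t < sqrt (real (n - (i + 1)) / real (i + 1))"
    using assms(4) by (simp add: diff_diff_add)
  then have t': "t < sqrt (real (n - i) / real i)"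
    using ratio by (meson less_trans real_sqrt_less_iff)
  have "log_profile (real (i + 1)) (real (n - (i + 1))) t < log_profile (real i) (real (n - i)) t"
    using assms(1,2,3) t ratio by (intro log_profile_strict_mono_ratio) auto
  then have "ln (P n (i + 1) t) < ln (P n i t)"
    using assms(1,2,3) t t' by (simp add: ln_P_eq_log_profile)
  then show ?thesis
    using ln_P_eq_log_profile(1)[of i n t] ln_P_eq_log_profile(1)[of "i + 1" n t] assms t t'
    by simp
qed

lemma inverse_sqrt_le_threshold:
  assumes "1 \<le> i" "i \<le> n - 2"
  shows "1 / sqrt (real n - 1) \<le> sqrt (real (n - i - 1) / real (i + 1))"
proof -
  have "1 / real (n - 1) \<le> 1 / real (i + 1)"
    using assms by (intro divide_left_mono) auto
  also have "\<dots> \<le> real (n - i - 1) / real (i + 1)"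
    using assms by (intro divide_right_mono) auto
  finally have "sqrt (1 / real (n - 1)) \<le> sqrt (real (n - i - 1) / real (i + 1))"
    by (rule real_sqrt_le_mono)
  moreover have "1 / sqrt (real n - 1) = sqrt (1 / real (n - 1))"
    using assms by (simp add: real_sqrt_divide of_nat_diff)
  ultimately show ?thesis by simp
qed

theorem lemma2:
  fixes n :: nat
  assumes "n \<ge> 2"
  shows "(\<forall>i t. 1 \<le> i \<and> i \<le> n - 2 \<and> 0 < t
            \<and> t < sqrt (real (n - i - 1) / real (i + 1))
            \<longrightarrow> P n i t > P n (i + 1) t)
       \<and> (\<forall>t. 0 < t \<and> t < 1 / sqrt (real n - 1)
            \<longrightarrow> (\<forall>i. 1 \<le> i \<and> i \<le> n - 2 \<longrightarrow> P n (i + 1) t < P n i t))"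
proof (intro conjI allI impI)
  fix i t
  assume "1 \<le> i \<and> i \<le> n - 2 \<and> 0 < t \<and> t < sqrt (real (n - i - 1) / real (i + 1))"
  then show "P n (i + 1) t < P n i t" using P_Suc_less by blast
next
  fix t i
  assume t: "0 < t \<and> t < 1 / sqrt (real n - 1)" and i: "1 \<le> i \<and> i \<le> n - 2"
  then have "t < sqrt (real (n - i - 1) / real (i + 1))"
    using inverse_sqrt_le_threshold[of i n] by linarith
  with t i show "P n (i + 1) t < P n i t" using P_Suc_less by blast
qed

end
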